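(* Let $V$ be a finite set of variables and let $D_{\mathit{dag}}$ be the ABA framework defined in the context. Then the set of preferred extensions of $D_{\mathit{dag}}$ equals the set of stable extensions of $D_{\mathit{dag}}$.
   Context: Assumption-based argumentation (ABA). An ABA framework (ABAF) is a tuple $D=(\mathcal L,\mathcal R,\mathcal A,\overline{\cdot})$ where $\mathcal L$ is a set of sentences, $\mathcal R$ is a set of rules $a_0\leftarrow a_1,\dots,a_n$ ($n\ge 0$), $\mathcal A\subseteq\mathcal L$ is a set of assumptions and $\overline{\cdot}:\mathcal A\to\mathcal L$ is the contrary function. For $S\subseteq\mathcal A$, $S\vdash q$ if there is a finite rooted labelled tree whose root is labelled $q$, whose set of leaf labels is $S$ or $S\cup\{\top\}$, and in which every inner node is labelled $\mathrm{head}(r)$ for some $r\in\mathcal R$ with children labelled by the distinct elements of $\mathrm{body}(r)$ (or a single child $\top$ if the body is empty). $S$ attacks $T\subseteq\mathcal A$ if there are $S'\subseteq S$ and $a\in T$ with $S'\vdash\overline a$. $S$ is conflict-free if it does not attack itself; $S$ defends $T$ if $S$ attacks every set of assumptions attacking $T$; admissible if conflict-free and it defends itself; complete if admissible and it contains every assumption set it defends; preferred if $\subseteq$-maximal among complete sets; stable if admissible and it attacks $\{a\}$ for every $a\in\mathcal A\setminus S$. The framework $D_{\mathit{dag}}$: for a finite set $V$ of variables, assumptions are $\mathit{arr}_{xy}$ for all ordered pairs $x\neq y$ in $V$ and one assumption $\mathit{noe}_{xy}=\mathit{noe}_{yx}$ per unordered pair of distinct variables; each assumption $a$ has its own distinct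 fresh contrary $\overline a$; rules are (i) $\overline a\leftarrow b$ for all distinct $a,b\in\{\mathit{arr}_{xy},\mathit{arr}_{yx},\mathit{noe}_{xy}\}$; (ii) for each sequence $x_1\dots x_k$ of variables with consecutive elements distinct and $x_1=x_k$, and each $1\le i<k$, the rule $\overline{\mathit{arr}_{x_ix_{i+1}}}\leftarrow \mathit{arr}_{x_1x_2},\dots,\mathit{arr}_{x_{k-1}x_k}$. *)

theory Defs
  imports Main
begin

text \<open>An ABA framework is given by a set of rules R (pairs of a head sentence and
the set of the distinct body sentences), a set of assumptions A, and a contrary
function ctr (only its values on A matter).\<close>

type_synonym 'l rule = "'l \<times> 'l set"

text \<open>derives R A S q: there is a finite derivation tree of q whose set of
assumption leaves is exactly S (leaves labelled by the top element, arising from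
rules with empty body, contribute nothing).\<close>
inductive derives :: "'l rule set \<Rightarrow> 'l set \<Rightarrow> 'l set \<Rightarrow> 'l \<Rightarrow> bool"
  for R :: "'l rule set" and A :: "'l set" where
  leaf: "a \<in> A \<Longrightarrow> derives R A {a} a"
| rule: "(h, B) \<in> R \<Longrightarrow> finite B \<Longrightarrow> (\<forall>b\<in>B. derives R A (f b) b)
          \<Longrightarrow> derives R A (\<Union>b\<in>B. f b) h"

definition attacks :: "'l rule set \<Rightarrow> 'l set \<Rightarrow> ('l \<Rightarrow> 'l) \<Rightarrow> 'l set \<Rightarrow> 'l set \<Rightarrow> bool" where
  "attacks R A ctr S T \<longleftrightarrow> (\<exists>S' a. S' \<subseteq> S \<and> a \<in> T \<and> derives R A S' (ctr a))"

definition conflict_free :: "'l rule set \<Rightarrow> 'l set \<Rightarrow> ('l \<Rightarrow> 'l) \<Rightarrow> 'l set \<Rightarrow> bool" where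
  "conflict_free R A ctr S \<longleftrightarrow> S \<subseteq> A \<and> \<not> attacks R A ctr S S"

definition defends :: "'l rule set \<Rightarrow> 'l set \<Rightarrow> ('l \<Rightarrow> 'l) \<Rightarrow> 'l set \<Rightarrow> 'l set \<Rightarrow> bool" where
  "defends R A ctr S T \<longleftrightarrow>
     (\<forall>U. U \<subseteq> A \<longrightarrow> attacks R A ctr U T \<longrightarrow> attacks R A ctr S U)"

definition admissible :: "'l rule set \<Rightarrow> 'l set \<Rightarrow> ('l \<Rightarrow> 'l) \<Rightarrow> 'l set \<Rightarrow> bool" where
  "admissible R A ctr S \<longleftrightarrow> conflict_free R A ctr S \<and> defends R A ctr S S"

definition complete :: "'l rule set \<Rightarrow> 'l set \<Rightarrow> ('l \<Rightarrow> 'l) \<Rightarrow> 'l set \<Rightarrow> bool" where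
  "complete R A ctr S \<longleftrightarrow> admissible R A ctr S \<and>
     (\<forall>T. T \<subseteq> A \<longrightarrow> defends R A ctr S T \<longrightarrow> T \<subseteq> S)"

definition preferred :: "'l rule set \<Rightarrow> 'l set \<Rightarrow> ('l \<Rightarrow> 'l) \<Rightarrow> 'l set \<Rightarrow> bool" where
  "preferred R A ctr S \<longleftrightarrow> complete R A ctr S \<and>
     (\<forall>T. complete R A ctr T \<longrightarrow> S \<subseteq> T \<longrightarrow> T = S)"

definition stable :: "'l rule set \<Rightarrow> 'l set \<Rightarrow> ('l \<Rightarrow> 'l) \<Rightarrow> 'l set \<Rightarrow> bool" where
  "stable R A ctr S \<longleftrightarrow> admissible R A ctr S \<and>
     (\<forall>a \<in> A - S. attacks R A ctr S {a})"

text \<open>Assumptions: arr x y, and noe {x,y} (one per unordered pair, so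
noe_xy = noe_yx). Sentences: assumptions and one fresh contrary per assumption.\<close>
datatype 'v asm = Arr 'v 'v | Noe "'v set"
datatype 'v dsent = As "'v asm" | Ct "'v asm"

fun dag_ctr :: "'v dsent \<Rightarrow> 'v dsent" where
  "dag_ctr (As a) = Ct a"
| "dag_ctr (Ct a) = Ct a"  \<comment> \<open>irrelevant: contrary is only used on assumptions\<close>

definition dag_asms :: "'v set \<Rightarrow> 'v dsent set" where
  "dag_asms V = {As (Arr x y) | x y. x \<in> V \<and> y \<in> V \<and> x \<noteq> y}
              \<union> {As (Noe {x, y}) | x y. x \<in> V \<and> y \<in> V \<and> x \<noteq> y}"

definition dag_rules_i :: "'v set \<Rightarrow> 'v dsent rule set" where
  "dag_rules_i V = {(Ct a, {As b}) | a b x y. x \<in> V \<and> y \<in> V \<and> x \<noteq> y \<and>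
      a \<in> {Arr x y, Arr y x, Noe {x, y}} \<and> b \<in> {Arr x y, Arr y x, Noe {x, y}} \<and> a \<noteq> b}"

text \<open>Rules (ii): for a sequence xs = x_1 ... x_k of variables (0-indexed here) with
consecutive elements distinct and x_1 = x_k, and each position i < k-1 (0-indexed),
the rule with head the contrary of arr_{x_i x_(i+1)} and body all arr_{x_j x_(j+1)}.\<close>
definition dag_rules_ii :: "'v set \<Rightarrow> 'v dsent rule set" where
  "dag_rules_ii V = {(Ct (Arr (xs ! i) (xs ! Suc i)),
                       {As (Arr (xs ! j) (xs ! Suc j)) | j. j < length xs - 1}) | xs i.
      xs \<noteq> [] \<and> set xs \<subseteq> V \<and> (\<forall>j < length xs - 1. xs ! j \<noteq> xs ! Suc j) \<and>
      hd xs = last xs \<and> i < length xs - 1}"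

definition dag_rules :: "'v set \<Rightarrow> 'v dsent rule set" where
  "dag_rules V = dag_rules_i V \<union> dag_rules_ii V"

end

theory Submission
  imports Defs
begin

text \<open>Stable extensions are always preferred. Conversely, in \<open>D_dag\<close> every conflict-free
set \<open>S\<close> becomes stable once \<open>noe_xy\<close> is added for each pair \<open>x, y\<close> on which \<open>S\<close> contains
neither arrow: the new assumptions are only attacked by the missing arrows, the cycle rules
only involve arrows (which all come from \<open>S\<close>), and every pair of variables is now decided.
A preferred set is complete, the stable extension of it is complete too, so by maximality
the two coincide.\<close>

lemma attacks_mono:
  "attacks R A ctr S T \<Longrightarrow> S \<subseteq> S' \<Longrightarrow> T \<subseteq> T' \<Longrightarrow> attacks R A ctr S' T'"
  unfolding attacks_def by blast

lemma stableI:
  assumes cf: "conflict_free R A ctr S"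
    and outside: "\<forall>a \<in> A - S. attacks R A ctr S {a}"
  shows "stable R A ctr S"
proof -
  have "attacks R A ctr S U" if "U \<subseteq> A" "attacks R A ctr U S" for U
  proof -
    obtain U' a where U': "U' \<subseteq> U" "a \<in> S" "derives R A U' (ctr a)"
      using \<open>attacks R A ctr U S\<close> unfolding attacks_def by blast
    have "\<not> U' \<subseteq> S"
      using U' cf unfolding conflict_free_def attacks_def by blast
    then obtain u where "u \<in> U" "u \<in> A - S"
      using U'(1) \<open>U \<subseteq> A\<close> by blast
    then have "attacks R A ctr S {u}" "{u} \<subseteq> U"
      using outside by auto
    then show ?thesis
      by (rule attacks_mono[OF _ order_refl])
  qed
  then show ?thesis
    using assms unfolding stable_def admissible_def defends_def by blast
qed

lemma stable_imp_complete:
  assumes "stable R A ctr S"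
  shows "complete R A ctr S"
proof -
  have adm: "admissible R A ctr S" and outside: "\<forall>a \<in> A - S. attacks R A ctr S {a}"
    using assms unfolding stable_def by auto
  then have cf: "\<not> attacks R A ctr S S" "S \<subseteq> A"
    unfolding admissible_def conflict_free_def by auto
  have "t \<in> S" if "T \<subseteq> A" "defends R A ctr S T" "t \<in> T" for T t
  proof (rule ccontr)
    assume "t \<notin> S"
    then have "attacks R A ctr S {t}"
      using outside that(1,3) by blast
    then obtain S' a where S': "S' \<subseteq> S" "a \<in> {t}" "derives R A S' (ctr a)"
      unfolding attacks_def by blast
    then have "attacks R A ctr S' T"
      using \<open>t \<in> T\<close> unfolding attacks_def by blast
    then have "attacks R A ctr S S'"
      using that(2) S'(1) cf(2) unfolding defends_def by blast
    then show False
      using cf(1) attacks_mono[OF _ order_refl S'(1)] by blast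
  qed
  then show ?thesis
    using adm unfolding complete_def by blast
qed

lemma stable_imp_preferred:
  assumes "stable R A ctr S"
  shows "preferred R A ctr S"
proof -
  have "T = S" if "complete R A ctr T" "S \<subseteq> T" for T
  proof (rule ccontr)
    assume "T \<noteq> S"
    then obtain t where "t \<in> T" "t \<notin> S"
      using \<open>S \<subseteq> T\<close> by blast
    moreover have "\<not> attacks R A ctr T T" "T \<subseteq> A"
      using \<open>complete R A ctr T\<close> unfolding complete_def admissible_def conflict_free_def by auto
    ultimately show False
      using assms \<open>S \<subseteq> T\<close> attacks_mono[of R A ctr S "{t}" T T]
      unfolding stable_def by blast
  qed
  then show ?thesis
    using stable_imp_complete[OF assms] unfolding preferred_def by blast
qed

lemma preferred_eq_stable_superset:
  assumes "preferred R A ctr S" "stable R A ctr S'" "S \<subseteq> S'"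
  shows "S' = S"
  using assms stable_imp_complete unfolding preferred_def by blast

definition dag_rivals :: "'v set \<Rightarrow> 'v asm \<Rightarrow> 'v asm \<Rightarrow> bool" where
  "dag_rivals V a b \<longleftrightarrow> (\<exists>x y. x \<in> V \<and> y \<in> V \<and> x \<noteq> y \<and>
      a \<in> {Arr x y, Arr y x, Noe {x, y}} \<and> b \<in> {Arr x y, Arr y x, Noe {x, y}} \<and> a \<noteq> b)"

lemma dag_rivals_sym: "dag_rivals V a b \<Longrightarrow> dag_rivals V b a"
  unfolding dag_rivals_def by blast

lemma dag_rivals_Noe: "dag_rivals V (Noe {x, y}) b \<Longrightarrow> b = Arr x y \<or> b = Arr y x"
  unfolding dag_rivals_def by (auto simp: doubleton_eq_iff)

lemma dag_rules_i_iff: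
  "(h, B) \<in> dag_rules_i V \<longleftrightarrow> (\<exists>a b. h = Ct a \<and> B = {As b} \<and> dag_rivals V a b)"
  unfolding dag_rules_i_def dag_rivals_def by blast

lemma dag_rules_head_Ct: "(h, B) \<in> dag_rules V \<Longrightarrow> \<exists>c. h = Ct c"
  unfolding dag_rules_def dag_rules_i_def dag_rules_ii_def by blast

lemma dag_rules_cases:
  assumes "(Ct c, B) \<in> dag_rules V"
  obtains b where "B = {As b}" "dag_rivals V c b"
    | "As c \<in> B" "B \<subseteq> {As (Arr u v) | u v. True}"
  using assms dag_rules_i_iff[of "Ct c" B V] unfolding dag_rules_def dag_rules_ii_def by blast

lemma dag_rules_body_asms:
  assumes "(h, B) \<in> dag_rules V"
  shows "B \<subseteq> dag_asms V"
proof
  fix e assume "e \<in> B"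
  show "e \<in> dag_asms V"
  proof (cases "(h, B) \<in> dag_rules_i V")
    case True
    then show ?thesis
      using \<open>e \<in> B\<close> unfolding dag_rules_i_def dag_asms_def by blast
  next
    case False
    then obtain xs j where "set xs \<subseteq> V" "\<forall>j < length xs - 1. xs ! j \<noteq> xs ! Suc j"
        "j < length xs - 1" "e = As (Arr (xs ! j) (xs ! Suc j))"
      using assms \<open>e \<in> B\<close> unfolding dag_rules_def dag_rules_ii_def by blast
    moreover have "xs ! j \<in> V" "xs ! Suc j \<in> V"
      using calculation(1,3) nth_mem[of j xs] nth_mem[of "Suc j" xs] by auto
    ultimately show ?thesis
      unfolding dag_asms_def by blast
  qed
qed

lemma dag_rules_body_finite:
  assumes "(h, B) \<in> dag_rules V"
  shows "finite B"
proof (cases "(h, B) \<in> dag_rules_i V")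
  case True
  then show ?thesis unfolding dag_rules_i_def by auto
next
  case False
  then obtain xs where "B = (\<lambda>j. As (Arr (xs ! j) (xs ! Suc j))) ` {..<length xs - 1}"
    using assms unfolding dag_rules_def dag_rules_ii_def by blast
  then show ?thesis by simp
qed

lemma dag_derives_As: "derives (dag_rules V) A S (As d) \<Longrightarrow> S = {As d}"
  by (cases rule: derives.cases) (auto dest: dag_rules_head_Ct)

text \<open>Rule bodies consist of assumptions, so derivations of contraries have depth one.\<close>
lemma dag_derives_Ct_iff:
  "derives (dag_rules V) (dag_asms V) S (Ct c) \<longleftrightarrow> (Ct c, S) \<in> dag_rules V"
proof
  assume "derives (dag_rules V) (dag_asms V) S (Ct c)"
  then show "(Ct c, S) \<in> dag_rules V"
  proof (cases rule: derives.cases)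
    case leaf
    then show ?thesis by (simp add: dag_asms_def)
  next
    case (rule B f)
    have "f b = {b}" if "b \<in> B" for b
      using that rule(4) dag_rules_body_asms[OF rule(2)] dag_derives_As
      unfolding dag_asms_def by blast
    then show ?thesis
      using rule(1,2) by simp
  qed
next
  assume r: "(Ct c, S) \<in> dag_rules V"
  have "derives (dag_rules V) (dag_asms V) (\<Union>b\<in>S. {b}) (Ct c)"
    using dag_rules_body_asms[OF r] dag_rules_body_finite[OF r]
    by (intro derives.rule[OF r]) (auto intro: derives.leaf)
  then show "derives (dag_rules V) (dag_asms V) S (Ct c)"
    by simp
qed

lemma dag_attacks_iff:
  "attacks (dag_rules V) (dag_asms V) dag_ctr S T \<longleftrightarrow>
    (\<exists>S' a. S' \<subseteq> S \<and> a \<in> T \<and> (dag_ctr a, S') \<in> dag_rules V)"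
proof -
  have "derives (dag_rules V) (dag_asms V) S' (dag_ctr a) \<longleftrightarrow> (dag_ctr a, S') \<in> dag_rules V"
    for S' a
    by (cases a) (simp_all add: dag_derives_Ct_iff)
  then show ?thesis
    unfolding attacks_def by simp
qed

lemma dag_rivals_attack:
  assumes "dag_rivals V c b" "As b \<in> S"
  shows "attacks (dag_rules V) (dag_asms V) dag_ctr S {As c}"
proof -
  have "(Ct c, {As b}) \<in> dag_rules V"
    using assms(1) dag_rules_i_iff unfolding dag_rules_def by blast
  moreover have "{As b} \<subseteq> S"
    using assms(2) by simp
  ultimately show ?thesis
    unfolding dag_attacks_iff by (intro exI[of _ "{As b}"] exI[of _ "As c"]) simp
qed

definition noe_completion :: "'v set \<Rightarrow> 'v dsent set \<Rightarrow> 'v dsent set" where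
  "noe_completion V S = S \<union> {As (Noe {x, y}) | x y. x \<in> V \<and> y \<in> V \<and> x \<noteq> y \<and>
      As (Arr x y) \<notin> S \<and> As (Arr y x) \<notin> S}"

lemma noe_completion_Arr: "As (Arr u v) \<in> noe_completion V S \<longleftrightarrow> As (Arr u v) \<in> S"
  unfolding noe_completion_def by blast

lemma noe_completion_subset_asms:
  "S \<subseteq> dag_asms V \<Longrightarrow> noe_completion V S \<subseteq> dag_asms V"
  unfolding noe_completion_def dag_asms_def by blast

lemma noe_completion_rivals:
  assumes "dag_rivals V c b" "As c \<in> noe_completion V S" "As b \<in> noe_completion V S"
  shows "As c \<in> S"
proof (rule ccontr)
  assume "As c \<notin> S"
  then obtain x y where c: "c = Noe {x, y}" "As (Arr x y) \<notin> S" "As (Arr y x) \<notin> S"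
    using assms(2) unfolding noe_completion_def by blast
  have "b = Arr x y \<or> b = Arr y x"
    using dag_rivals_Noe[of V x y b] assms(1) c(1) by simp
  then show False
    using assms(3) c(2,3) by (auto simp: noe_completion_Arr)
qed

lemma noe_completion_attacks_self:
  assumes "S \<subseteq> dag_asms V"
    and "attacks (dag_rules V) (dag_asms V) dag_ctr (noe_completion V S) (noe_completion V S)"
  shows "attacks (dag_rules V) (dag_asms V) dag_ctr S S"
proof -
  obtain B a where B: "B \<subseteq> noe_completion V S" "a \<in> noe_completion V S"
      "(dag_ctr a, B) \<in> dag_rules V"
    using assms(2) unfolding dag_attacks_iff by blast
  obtain c where "a = As c"
    using B(2) noe_completion_subset_asms[OF assms(1)] unfolding dag_asms_def by blast
  with B have r: "(Ct c, B) \<in> dag_rules V" "As c \<in> noe_completion V S"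
    by auto
  from r(1) show ?thesis
  proof (cases rule: dag_rules_cases)
    case (1 b)
    then have "As b \<in> noe_completion V S"
      using B(1) by simp
    then have "As c \<in> S" "As b \<in> S"
      using noe_completion_rivals r(2) \<open>dag_rivals V c b\<close> dag_rivals_sym by metis+
    then show ?thesis
      using dag_rivals_attack[OF \<open>dag_rivals V c b\<close>] attacks_mono[OF _ order_refl] by blast
  next
    case 2
    have "B \<subseteq> S"
    proof
      fix e assume "e \<in> B"
      then obtain u v where "e = As (Arr u v)"
        using 2 by blast
      then show "e \<in> S"
        using \<open>e \<in> B\<close> B(1) by (auto simp: noe_completion_Arr)
    qed
    then show ?thesis
      unfolding dag_attacks_iff using \<open>As c \<in> B\<close> r(1)
      by (intro exI[of _ B] exI[of _ "As c"]) auto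
  qed
qed

lemma noe_completion_attacks_outside:
  assumes "a \<in> dag_asms V - noe_completion V S"
  shows "attacks (dag_rules V) (dag_asms V) dag_ctr (noe_completion V S) {a}"
proof -
  obtain x y d where xy: "x \<in> V" "y \<in> V" "x \<noteq> y" "a = As d" "d \<in> {Arr x y, Noe {x, y}}"
    using assms unfolding dag_asms_def by blast
  obtain e where e: "e \<in> {Arr x y, Arr y x, Noe {x, y}}" "As e \<in> noe_completion V S"
    using xy(1-3) unfolding noe_completion_def by blast
  then have "dag_rivals V d e"
    using xy assms unfolding dag_rivals_def by blast
  then show ?thesis
    using dag_rivals_attack e(2) xy(4) by blast
qed

lemma noe_completion_stable:
  assumes "conflict_free (dag_rules V) (dag_asms V) dag_ctr S"
  shows "stable (dag_rules V) (dag_asms V) dag_ctr (noe_completion V S)"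
proof (rule stableI)
  have "S \<subseteq> dag_asms V" "\<not> attacks (dag_rules V) (dag_asms V) dag_ctr S S"
    using assms unfolding conflict_free_def by auto
  then show "conflict_free (dag_rules V) (dag_asms V) dag_ctr (noe_completion V S)"
    unfolding conflict_free_def
    using noe_completion_subset_asms noe_completion_attacks_self by blast
qed (use noe_completion_attacks_outside in blast)

theorem lemma1:
  fixes V :: "'v set"
  assumes "finite V"
  shows "{S. preferred (dag_rules V) (dag_asms V) dag_ctr S}
       = {S. stable (dag_rules V) (dag_asms V) dag_ctr S}"
proof (intro set_eqI iffI; unfold mem_Collect_eq)
  fix S
  assume pref: "preferred (dag_rules V) (dag_asms V) dag_ctr S"
  then have "conflict_free (dag_rules V) (dag_asms V) dag_ctr S"
    unfolding preferred_def complete_def admissible_def by blast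
  then have "stable (dag_rules V) (dag_asms V) dag_ctr (noe_completion V S)"
    by (rule noe_completion_stable)
  moreover have "noe_completion V S = S"
    using preferred_eq_stable_superset[OF pref calculation] unfolding noe_completion_def by blast
  ultimately show "stable (dag_rules V) (dag_asms V) dag_ctr S"
    by simp
next
  fix S
  assume "stable (dag_rules V) (dag_asms V) dag_ctr S"
  then show "preferred (dag_rules V) (dag_asms V) dag_ctr S"
    by (rule stable_imp_preferred)
qed

end
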